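(* Consider the Robust protocol with parameters $k,\varepsilon,c$ (described in the context) run on any event stream chosen by a white-box adaptive adversary. Let $R_N$ be the number of rounds the protocol performs to process the first $N$ events. Then \[ \mathbb E[R_N]=\Theta\!\left(\frac{\log N}{\log\!\left(1+\frac{\sqrt k\,\varepsilon}{c}\right)}\right). \] Moreover, for any $\delta\in(0,1)$, with probability at least $1-\delta$, \[ R_N=O\!\left(\frac{\log N}{\log\!\left(1+\frac{\sqrt k\,\varepsilon}{c}\right)}+\log\frac1\delta\right), \] where the implicit constant is absolute and independent of $\delta,\varepsilon,k,N$.
   Context: Distributed counting: a server and $k$ sites; events arrive one at a time, each at some site; $n_i$ is the number of events at site $i$ so far. Robust protocol with parameters $k$, $\varepsilon>0$, $c\ge1$: each site $i$ keeps a transmission probability $p$ (initially $1$, updated by server broadcasts) and its count $n_i$. On each event at site $i$: $n_i\gets n_i+1$, and independently with probability $p$ the site sends ReportSample to the server. On receiving CountRequest, site $i$ sends its current $n_i$. The server keeps a counter $B=0$, values $\bar n_i=0$, and $p=1$; its estimate is $\hat n=\bar n+B/p$ with $\bar n=\sum_i\bar n_i$. On receiving ReportSample the server sets $B\gets B+1$; if now $B=k$, the round ends and a new round begins: the server broadcasts CountRequest, sets each $\bar n_i$ to the reported exact $n_i$, sets $p\gets\min\{1,c\sqrt k/(\varepsilon\bar n)\}$, broadcasts $p$, and sets $B\gets0$. A white-box adaptive adversary chooses the site of each next event as an arbitrary function of the full history of states, realized randomness and messages. *)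

theory Defs
  imports "HOL-Probability.Probability"
begin

text \<open>Sites are indexed 0..k-1. All sites hold the same transmission probability
  as the server (it is broadcast), so a single field p is kept.
  rounds counts the rounds that have ended (i.e. how often B reached k).\<close>

record rstate =
  cnt    :: "nat \<Rightarrow> nat"
  nbar   :: "nat \<Rightarrow> nat"
  bcnt   :: nat
  prob   :: real
  rounds :: nat

definition rinit :: rstate where
  "rinit = \<lparr>cnt = (\<lambda>_. 0), nbar = (\<lambda>_. 0), bcnt = 0, prob = 1, rounds = 0\<rparr>"

text \<open>One event at site i; b is the outcome of the site's coin with
  probability p (True = ReportSample sent).\<close>
definition rstep :: "nat \<Rightarrow> real \<Rightarrow> real \<Rightarrow> rstate \<Rightarrow> nat \<Rightarrow> bool \<Rightarrow> rstate" where
  "rstep k \<epsilon> c s i b =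
     (let n' = (cnt s)(i := cnt s i + 1) in
      if \<not> b then s\<lparr>cnt := n'\<rparr>
      else if bcnt s + 1 = k then
        (let nb = (\<Sum>j<k. n' j) in
         s\<lparr>cnt := n', nbar := n', bcnt := 0,
           prob := min 1 (c * sqrt (real k) / (\<epsilon> * real nb)),
           rounds := rounds s + 1\<rparr>)
      else s\<lparr>cnt := n', bcnt := bcnt s + 1\<rparr>)"

text \<open>The adversary sees the
  whole history: the list of all states so far (initial state first, current
  state last) and all realised coin flips; it returns the site of the next
  event.\<close>
primrec rrun :: "nat \<Rightarrow> real \<Rightarrow> real \<Rightarrow> (rstate list \<Rightarrow> bool list \<Rightarrow> nat) \<Rightarrow> nat
                 \<Rightarrow> (rstate list \<times> bool list) pmf" where
  "rrun k \<epsilon> c adv 0 = return_pmf ([rinit], [])"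
| "rrun k \<epsilon> c adv (Suc m) =
     bind_pmf (rrun k \<epsilon> c adv m)
       (\<lambda>(ss, bs). let s = last ss; i = adv ss bs in
          map_pmf (\<lambda>b. (ss @ [rstep k \<epsilon> c s i b], bs @ [b])) (bernoulli_pmf (prob s)))"

definition RN :: "rstate list \<times> bool list \<Rightarrow> nat" where
  "RN h = rounds (last (fst h))"

definition valid_adv :: "nat \<Rightarrow> (rstate list \<Rightarrow> bool list \<Rightarrow> nat) \<Rightarrow> bool" where
  "valid_adv k adv \<longleftrightarrow> (\<forall>ss bs. adv ss bs < k)"

definition Lscale :: "nat \<Rightarrow> real \<Rightarrow> real \<Rightarrow> nat \<Rightarrow> real" where
  "Lscale k \<epsilon> c N = ln (real N) / ln (1 + sqrt (real k) * \<epsilon> / c)"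

end

theory Submission
  imports Defs
begin

(* Write n for the number of events so far, B for the server counter, p for the sampling
   probability, R for the number of completed rounds and a = sqrt k eps / c. The horizon
   H = n + (k - B) / p is the count at which the current round is expected to end. Within a
   round H is a martingale; a round end resets it to n + max k (a n), which multiplies it by at
   most (1 + a) (R + 2) / (R + 1) because n >= k (R + 1). So ln H - R ln (1 + a) - ln (R + 1)
   is a supermartingale whatever the adversary does, and H >= N after N events gives
   E[R_N] >= (ln N - O(1)) / (2 ln (1 + a)).
   Conversely every round end multiplies H + 1 by at least 1 + a / 2, which makes
   exp (theta R) / ((n + 1)^(9 nu) (H + 1)^nu) a supermartingale for theta = nu ln (1 + a / 2)
   >= 1. Hence E[exp (theta R_N)] is polynomial in N, and Jensen's and Markov's inequalities
   give the upper bound on E[R_N] and the tail bound. *)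

lemma eventually_ln_ge: "\<forall>\<^sub>F N in sequentially. T \<le> ln (real N)"
  using filterlim_compose[OF ln_at_top filterlim_real_sequentially]
  by (simp add: filterlim_at_top)

lemma ln_le_linear:
  fixes x \<eta> :: real
  assumes "0 < \<eta>" "\<eta> \<le> 1" "0 \<le> x"
  shows "ln (x + 1) \<le> \<eta> * x + ln (1 / \<eta>)"
proof -
  have "ln (\<eta> * (x + 1)) \<le> \<eta> * (x + 1) - 1"
    using assms by (intro ln_le_minus_one) auto
  also have "ln (\<eta> * (x + 1)) = ln \<eta> + ln (x + 1)"
    using assms by (simp add: ln_mult)
  finally show ?thesis
    using assms by (simp add: ln_div algebra_simps)
qed

text \<open>The two successors \<open>H + 1 - 1 / p\<close> and \<open>H + 1\<close> average to \<open>H\<close>, so this is concavity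
  of \<open>ln\<close>.\<close>

lemma ln_mean_step:
  fixes p H :: real
  assumes "0 < p" "p \<le> 1" "1 / p \<le> H"
  shows "p * ln (H + 1 - 1 / p) + (1 - p) * ln (H + 1) \<le> ln H"
proof -
  have "0 < H + 1 - 1 / p" "0 < H + 1"
    using assms by (auto intro: order.strict_trans2[of 0 "1 / p"])
  then have "(1 - (1 - p)) * ln (H + 1 - 1 / p) + (1 - p) * ln (H + 1)
      \<le> ln ((1 - (1 - p)) *\<^sub>R (H + 1 - 1 / p) + (1 - p) *\<^sub>R (H + 1))"
    using assms by (intro concave_onD[OF ln_concave]) auto
  also have "(1 - (1 - p)) *\<^sub>R (H + 1 - 1 / p) + (1 - p) *\<^sub>R (H + 1) = H"
    using assms by (simp add: field_simps)
  finally show ?thesis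
    by simp
qed

lemma ln_add_max_le:
  fixes a x m R :: real
  assumes "0 < a" "0 \<le> R" "0 \<le> m" "m * (R + 1) \<le> x" "0 < x"
  shows "ln (x + max m (a * x)) \<le> ln x + ln (1 + a) + (ln (R + 2) - ln (R + 1))"
proof -
  have "x + max m (a * x) \<le> (x + m) * (1 + a)"
    using assms by (simp add: algebra_simps max_def)
  also have "\<dots> \<le> x * ((R + 2) / (R + 1)) * (1 + a)"
    using assms by (intro mult_right_mono) (auto simp: field_simps)
  finally have "ln (x + max m (a * x)) \<le> ln (x * (1 + a) * ((R + 2) / (R + 1)))"
    using assms by (simp add: mult.commute mult.left_commute)
  also have "\<dots> = ln x + ln (1 + a) + (ln (R + 2) - ln (R + 1))"
    using assms by (simp add: ln_mult ln_div)
  finally show ?thesis .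
qed

lemma divide_min_1_divide:
  fixes x r :: real
  assumes "0 < x" "0 < r"
  shows "x / min 1 (x / r) = max x r"
  using assms by (cases "x \<le> r") (auto simp: min_def max_def)

lemma one_plus_power_le:
  fixes w a B :: real
  assumes "0 \<le> w" "w \<le> a" "(1 + a) ^ (n - 1) \<le> B"
  shows "(1 + w) ^ n \<le> 1 + B * real n * w"
proof -
  have "(1 + w) ^ i \<le> B" if "i < n" for i
  proof -
    have "(1 + w) ^ i \<le> (1 + a) ^ i"
      using assms by (intro power_mono) auto
    also have "\<dots> \<le> (1 + a) ^ (n - 1)"
      using assms that by (intro power_increasing) auto
    finally show ?thesis
      using assms(3) by simp
  qed
  then have "(\<Sum>i<n. (1 + w) ^ i) \<le> real n * B"
    using sum_bounded_above[of "{..<n}" "\<lambda>i. (1 + w) ^ i" B] by simp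
  then have "w * (\<Sum>i<n. (1 + w) ^ i) \<le> w * (real n * B)"
    using assms(1) by (rule mult_left_mono)
  moreover have "(1 + w) ^ n = 1 + w * (\<Sum>i<n. (1 + w) ^ i)"
    using power_diff_1_eq[of "1 + w" n] by simp
  ultimately show ?thesis
    by (simp add: algebra_simps)
qed

lemma power_mean_step:
  fixes p y \<psi> a :: real and \<nu> \<alpha> :: nat
  assumes p: "0 < p" "p \<le> 1" and y: "1 \<le> y" "y + 1 \<le> \<psi> + 1 - 1 / p"
    and a: "1 / p - 1 \<le> a * y" "(1 + a) ^ (\<nu> - 1) \<le> 9" and "9 * \<nu> \<le> \<alpha>"
  shows "p * (\<psi> / (\<psi> + 1 - 1 / p)) ^ \<nu> + (1 - p) * (\<psi> / (\<psi> + 1)) ^ \<nu> \<le> ((y + 1) / y) ^ \<alpha>"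
proof -
  define x w where "x = \<psi> + 1 - 1 / p" and "w = (1 / p - 1) / x"
  have "0 < x" "y \<le> x"
    using y by (auto simp: x_def)
  have "1 \<le> 1 / p"
    using p by simp
  then have "0 \<le> w" "0 < \<psi>"
    using \<open>0 < x\<close> y by (auto simp: w_def x_def)
  have "w \<le> (1 / p - 1) / y"
    unfolding w_def using \<open>1 \<le> 1 / p\<close> \<open>y \<le> x\<close> y by (intro divide_left_mono) auto
  also have "\<dots> \<le> a"
    using a y by (simp add: divide_le_eq mult.commute)
  finally have "w \<le> a" .
  have "p * w = (1 - p) / x"
    using p \<open>0 < x\<close> by (simp add: w_def field_simps)
  also have "\<dots> \<le> 1 / y"
    using p \<open>0 < x\<close> \<open>y \<le> x\<close> y by (intro frac_le) auto
  finally have "p * w \<le> 1 / y" .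
  have "\<psi> / x = 1 + w"
    using \<open>0 < x\<close> by (simp add: w_def x_def field_simps)
  then have "p * (\<psi> / x) ^ \<nu> \<le> p * (1 + 9 * real \<nu> * w)"
    using one_plus_power_le[OF \<open>0 \<le> w\<close> \<open>w \<le> a\<close> a(2)] p by (intro mult_left_mono) auto
  moreover have "(1 - p) * (\<psi> / (\<psi> + 1)) ^ \<nu> \<le> 1 - p"
    using p \<open>0 < \<psi>\<close> by (intro mult_left_le power_le_one) auto
  ultimately have "p * (\<psi> / x) ^ \<nu> + (1 - p) * (\<psi> / (\<psi> + 1)) ^ \<nu> \<le> 1 + 9 * real \<nu> * (p * w)"
    by (simp add: algebra_simps)
  also have "\<dots> \<le> 1 + real \<alpha> * (1 / y)"
    using \<open>p * w \<le> 1 / y\<close> \<open>9 * \<nu> \<le> \<alpha>\<close> \<open>0 \<le> w\<close> p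
    by (intro add_left_mono mult_mono) auto
  also have "\<dots> \<le> (1 + 1 / y) ^ \<alpha>"
    using y by (intro Bernoulli_inequality) (auto intro: order.trans[of _ 0])
  also have "1 + 1 / y = (y + 1) / y"
    using y by (simp add: field_simps)
  finally show ?thesis
    by (simp add: x_def)
qed

lemma (in prob_space) expectation_le_ln_mgf_bound:
  fixes X :: "'a \<Rightarrow> real"
  assumes "integrable M X" "integrable M (\<lambda>x. exp (\<theta> * X x))" "0 < \<theta>"
    and "expectation (\<lambda>x. exp (\<theta> * X x)) \<le> B"
  shows "expectation X \<le> ln B / \<theta>"
proof -
  have "exp (expectation (\<lambda>x. \<theta> * X x)) \<le> expectation (\<lambda>x. exp (\<theta> * X x))"
    using assms exp_convex by (intro jensens_inequality[where I = UNIV]) auto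
  then have "exp (\<theta> * expectation X) \<le> B"
    using assms(4) by simp
  moreover have "0 < B"
    using calculation exp_gt_zero by (rule order.strict_trans2[rotated])
  ultimately have "\<theta> * expectation X \<le> ln B"
    by (simp add: ln_ge_iff)
  then show ?thesis
    using \<open>0 < \<theta>\<close> by (simp add: field_simps)
qed

lemma (in prob_space) prob_le_ln_mgf_bound_ge:
  fixes X :: "'a \<Rightarrow> real"
  assumes [measurable]: "X \<in> borel_measurable M"
    and "integrable M (\<lambda>x. exp (\<theta> * X x))" "0 < \<theta>"
    and "expectation (\<lambda>x. exp (\<theta> * X x)) \<le> B" "0 < B" "0 < \<delta>"
  shows "1 - \<delta> \<le> prob {x \<in> space M. X x \<le> (ln B + ln (1 / \<delta>)) / \<theta>}"
proof -
  define t where "t = (ln B + ln (1 / \<delta>)) / \<theta>"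
  define bad where "bad = {x \<in> space M. B / \<delta> \<le> exp (\<theta> * X x)}"
  have exp_t: "exp (\<theta> * t) = B / \<delta>"
    using assms by (simp add: t_def exp_add)
  have "prob bad \<le> expectation (\<lambda>x. exp (\<theta> * X x)) / (B / \<delta>)"
    unfolding bad_def using assms
    by (intro integral_Markov_inequality_measure[where A = "space M"]) auto
  also have "\<dots> \<le> \<delta>"
    using assms by (simp add: field_simps)
  finally have "prob bad \<le> \<delta>" .
  have "space M - bad \<subseteq> {x \<in> space M. X x \<le> t}"
  proof safe
    fix x assume "x \<notin> bad" "x \<in> space M"
    then have "exp (\<theta> * X x) < exp (\<theta> * t)"
      by (simp add: bad_def exp_t)
    then show "X x \<le> t"
      using \<open>0 < \<theta>\<close> by simp
  qed
  then have "prob (space M - bad) \<le> prob {x \<in> space M. X x \<le> t}"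
    by (intro finite_measure_mono) auto
  moreover have "prob (space M - bad) = 1 - prob bad"
    by (intro prob_compl) (simp add: bad_def)
  ultimately show ?thesis
    using \<open>prob bad \<le> \<delta>\<close> by (simp add: t_def)
qed

section \<open>Runs of the protocol\<close>

lemma sum_fun_upd_incr:
  fixes f :: "'a \<Rightarrow> 'b::comm_semiring_1"
  assumes "finite A" "i \<in> A"
  shows "(\<Sum>j\<in>A. (f(i := f i + 1)) j) = (\<Sum>j\<in>A. f j) + 1"
proof -
  have "(\<Sum>j\<in>A. (f(i := f i + 1)) j) = (\<Sum>j\<in>A. f j + (if j = i then 1 else 0))"
    by (intro sum.cong) auto
  then show ?thesis
    using assms by (simp add: sum.distrib)
qed

lemma finite_set_pmf_rrun: "finite (set_pmf (rrun k \<epsilon> c adv m))"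
  by (induction m) (auto simp: Let_def split: prod.splits)

lemma expectation_rrun_Suc:
  fixes f :: "rstate \<Rightarrow> real"
  assumes "\<And>h. h \<in> set_pmf (rrun k \<epsilon> c adv m) \<Longrightarrow> prob (last (fst h)) \<in> {0..1}"
  shows "measure_pmf.expectation (rrun k \<epsilon> c adv (Suc m)) (\<lambda>h. f (last (fst h))) =
    measure_pmf.expectation (rrun k \<epsilon> c adv m)
      (\<lambda>(ss, bs). let s = last ss; i = adv ss bs in
         prob s * f (rstep k \<epsilon> c s i True) + (1 - prob s) * f (rstep k \<epsilon> c s i False))"
    (is "?L = measure_pmf.expectation ?M ?g")
proof -
  let ?G = "\<lambda>(ss, bs). let s = last ss; i = adv ss bs in
      map_pmf (\<lambda>b. (ss @ [rstep k \<epsilon> c s i b], bs @ [b])) (bernoulli_pmf (prob s))"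
  have "?L = (\<Sum>h\<in>set_pmf ?M. pmf ?M h *\<^sub>R measure_pmf.expectation (?G h) (\<lambda>h. f (last (fst h))))"
    unfolding rrun.simps
    by (intro pmf_expectation_bind) (auto simp: finite_set_pmf_rrun Let_def split: prod.splits)
  also have "\<dots> = (\<Sum>h\<in>set_pmf ?M. pmf ?M h *\<^sub>R ?g h)"
    using assms by (intro sum.cong) (auto simp: Let_def algebra_simps split: prod.splits)
  also have "\<dots> = measure_pmf.expectation ?M ?g"
    by (rule integral_measure_pmf[symmetric]) (auto simp: finite_set_pmf_rrun)
  finally show ?thesis .
qed

locale robust_protocol =
  fixes k :: nat and \<epsilon> c :: real
  assumes k_ge_1: "1 \<le> k" and eps_pos: "0 < \<epsilon>" and c_pos: "0 < c"
begin

definition ratio :: real where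
  "ratio = sqrt (real k) * \<epsilon> / c"

definition rate :: real where
  "rate = ln (1 + ratio)"

definition event_count :: "rstate \<Rightarrow> nat" where
  "event_count s = (\<Sum>j<k. cnt s j)"

text \<open>The last conjunct holds because \<open>p\<close> is either still \<open>1\<close> or was last set to
  \<open>min 1 (k / (ratio * n'))\<close> for some count \<open>n' \<le> n\<close>.\<close>

definition protocol_inv :: "rstate \<Rightarrow> bool" where
  "protocol_inv s \<longleftrightarrow> bcnt s < k \<and> 0 < prob s \<and> prob s \<le> 1 \<and>
     k * rounds s + bcnt s \<le> event_count s \<and>
     real k / prob s \<le> max (real k) (ratio * real (event_count s))"

lemma ratio_pos: "0 < ratio"
  using k_ge_1 eps_pos c_pos by (simp add: ratio_def)

lemma rate_pos: "0 < rate"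
  using ratio_pos by (simp add: rate_def)

lemma event_count_rstep: "i < k \<Longrightarrow> event_count (rstep k \<epsilon> c s i b) = event_count s + 1"
  using sum_fun_upd_incr[of "{..<k}" i "cnt s"]
  by (simp add: rstep_def Let_def event_count_def del: fun_upd_apply)

lemma rstep_no_report [simp]:
  "bcnt (rstep k \<epsilon> c s i False) = bcnt s"
  "rounds (rstep k \<epsilon> c s i False) = rounds s"
  "prob (rstep k \<epsilon> c s i False) = prob s"
  by (simp_all add: rstep_def Let_def)

lemma rstep_report_within_round:
  assumes "bcnt s + 1 \<noteq> k"
  shows "bcnt (rstep k \<epsilon> c s i True) = bcnt s + 1"
    "rounds (rstep k \<epsilon> c s i True) = rounds s"
    "prob (rstep k \<epsilon> c s i True) = prob s"
  using assms by (simp_all add: rstep_def Let_def)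

lemma rstep_report_round_end:
  assumes "bcnt s + 1 = k" "i < k"
  shows "bcnt (rstep k \<epsilon> c s i True) = 0"
    "rounds (rstep k \<epsilon> c s i True) = rounds s + 1"
    "prob (rstep k \<epsilon> c s i True) = min 1 (real k / (ratio * real (event_count s + 1)))"
proof -
  have "(\<Sum>j<k. ((cnt s)(i := cnt s i + 1)) j) = event_count s + 1"
    using assms(2) sum_fun_upd_incr[of "{..<k}" i "cnt s"]
    by (simp add: event_count_def del: fun_upd_apply)
  moreover have "c * sqrt (real k) / (\<epsilon> * x) = real k / (ratio * x)" for x
  proof -
    have "real k / sqrt (real k) = sqrt (real k)"
      by (simp add: real_div_sqrt)
    then show ?thesis
      unfolding ratio_def
      by (metis divide_divide_eq_left' divide_divide_eq_right mult.commute times_divide_eq_left)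
  qed
  ultimately show "bcnt (rstep k \<epsilon> c s i True) = 0"
    "rounds (rstep k \<epsilon> c s i True) = rounds s + 1"
    "prob (rstep k \<epsilon> c s i True) = min 1 (real k / (ratio * real (event_count s + 1)))"
    using assms unfolding rstep_def Let_def by (simp_all del: of_nat_sum)
qed

lemma protocol_inv_rinit: "protocol_inv rinit"
  using k_ge_1 by (simp add: protocol_inv_def rinit_def event_count_def)

lemma protocol_inv_rstep:
  assumes inv: "protocol_inv s" and "i < k"
  shows "protocol_inv (rstep k \<epsilon> c s i b)"
proof -
  have event_count: "event_count (rstep k \<epsilon> c s i b) = event_count s + 1"
    using \<open>i < k\<close> by (rule event_count_rstep)
  have ratio_mono: "ratio * real (event_count s) \<le> ratio * real (event_count s + 1)"
    using ratio_pos by simp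
  consider "\<not> b" | "b" "bcnt s + 1 \<noteq> k" | "b" "bcnt s + 1 = k"
    by blast
  then show ?thesis
  proof cases
    case 3
    define p' where "p' = min 1 (real k / (ratio * real (event_count s + 1)))"
    have "0 < p'" "p' \<le> 1"
      using ratio_pos k_ge_1 by (auto simp: p'_def)
    moreover have "real k / p' = max (real k) (ratio * real (event_count s + 1))"
      unfolding p'_def using ratio_pos k_ge_1 by (intro divide_min_1_divide) auto
    moreover have "k * (rounds s + 1) \<le> event_count s + 1"
      using inv 3 by (simp add: protocol_inv_def)
    ultimately show ?thesis
      using 3 event_count rstep_report_round_end[OF 3(2) \<open>i < k\<close>]
      by (simp add: protocol_inv_def p'_def)
  qed (use inv event_count ratio_mono rstep_report_within_round in \<open>auto simp: protocol_inv_def\<close>)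
qed

lemma rrun_inv:
  assumes "valid_adv k adv"
  shows "h \<in> set_pmf (rrun k \<epsilon> c adv m) \<Longrightarrow>
    protocol_inv (last (fst h)) \<and> event_count (last (fst h)) = m"
proof (induction m arbitrary: h)
  case 0
  then have "last (fst h) = rinit"
    by simp
  then show ?case
    using protocol_inv_rinit by (simp add: rinit_def event_count_def)
next
  case (Suc m)
  from Suc.prems obtain ss bs b where
    prev: "(ss, bs) \<in> set_pmf (rrun k \<epsilon> c adv m)" and
    h: "h = (ss @ [rstep k \<epsilon> c (last ss) (adv ss bs) b], bs @ [b])"
    by (auto simp: Let_def split: prod.splits)
  have "adv ss bs < k"
    using assms by (simp add: valid_adv_def)
  with Suc.IH[OF prev] h show ?case
    by (simp add: protocol_inv_rstep event_count_rstep)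
qed

lemma rrun_supermartingale:
  fixes f :: "rstate \<Rightarrow> real"
  assumes adv: "valid_adv k adv"
    and step: "\<And>s i. protocol_inv s \<Longrightarrow> i < k \<Longrightarrow>
      prob s * f (rstep k \<epsilon> c s i True) + (1 - prob s) * f (rstep k \<epsilon> c s i False) \<le> f s"
  shows "measure_pmf.expectation (rrun k \<epsilon> c adv m) (\<lambda>h. f (last (fst h))) \<le> f rinit"
proof (induction m)
  case (Suc m)
  have "prob (last (fst h)) \<in> {0..1}" if "h \<in> set_pmf (rrun k \<epsilon> c adv m)" for h
    using rrun_inv[OF adv that] by (simp add: protocol_inv_def)
  then have "measure_pmf.expectation (rrun k \<epsilon> c adv (Suc m)) (\<lambda>h. f (last (fst h))) =
    measure_pmf.expectation (rrun k \<epsilon> c adv m)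
      (\<lambda>(ss, bs). let s = last ss; i = adv ss bs in
         prob s * f (rstep k \<epsilon> c s i True) + (1 - prob s) * f (rstep k \<epsilon> c s i False))"
    by (rule expectation_rrun_Suc)
  also have "\<dots> \<le> measure_pmf.expectation (rrun k \<epsilon> c adv m) (\<lambda>h. f (last (fst h)))"
  proof (intro integral_mono_AE AE_pmfI)
    fix h assume "h \<in> set_pmf (rrun k \<epsilon> c adv m)"
    moreover have "adv (fst h) (snd h) < k"
      using adv by (simp add: valid_adv_def)
    ultimately show "(case h of (ss, bs) \<Rightarrow> let s = last ss; i = adv ss bs in
         prob s * f (rstep k \<epsilon> c s i True) + (1 - prob s) * f (rstep k \<epsilon> c s i False))
       \<le> f (last (fst h))"
      using rrun_inv[OF adv] step by (auto simp: Let_def split: prod.splits)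
  qed (auto intro!: integrable_measure_pmf_finite simp: finite_set_pmf_rrun)
  finally show ?case
    using Suc by simp
qed simp

section \<open>The horizon\<close>

text \<open>Each of the \<open>k - B\<close> missing reports takes \<open>1 / p\<close> events on average.\<close>

definition horizon :: "rstate \<Rightarrow> real" where
  "horizon s = real (event_count s) + real (k - bcnt s) / prob s"

lemma horizon_ge: "protocol_inv s \<Longrightarrow> real (event_count s) + 1 / prob s \<le> horizon s"
  unfolding protocol_inv_def horizon_def by (auto intro: divide_right_mono)

lemma event_count_lt_horizon: "protocol_inv s \<Longrightarrow> real (event_count s) < horizon s"
proof -
  assume inv: "protocol_inv s"
  then have "0 < 1 / prob s"
    by (simp add: protocol_inv_def)
  with horizon_ge[OF inv] show ?thesis
    by linarith
qed

lemma horizon_le: "protocol_inv s \<Longrightarrow> horizon s \<le> real k + (1 + ratio) * real (event_count s)"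
proof -
  assume inv: "protocol_inv s"
  then have "real (k - bcnt s) / prob s \<le> real k / prob s"
    by (intro divide_right_mono) (auto simp: protocol_inv_def)
  also have "\<dots> \<le> max (real k) (ratio * real (event_count s))"
    using inv by (simp add: protocol_inv_def)
  also have "\<dots> \<le> real k + ratio * real (event_count s)"
    using ratio_pos by simp
  finally show ?thesis
    by (simp add: horizon_def algebra_simps)
qed

lemma inverse_prob_le: "protocol_inv s \<Longrightarrow> 1 / prob s - 1 \<le> ratio * real (event_count s)"
proof -
  assume inv: "protocol_inv s"
  then have "real k / prob s \<le> max (real k) (ratio * real (event_count s))"
    by (simp add: protocol_inv_def)
  also have "\<dots> \<le> real k * (1 + ratio * real (event_count s))"
    using k_ge_1 ratio_pos mult_right_mono[of 1 "real k" "ratio * real (event_count s)"]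
    by (simp add: algebra_simps)
  finally have "real k * (1 / prob s) \<le> real k * (1 + ratio * real (event_count s))"
    by simp
  moreover have "0 < real k"
    using k_ge_1 by simp
  ultimately have "1 / prob s \<le> 1 + ratio * real (event_count s)"
    by (rule mult_left_le_imp_le)
  then show ?thesis
    by simp
qed

lemma horizon_no_report: "i < k \<Longrightarrow> horizon (rstep k \<epsilon> c s i False) = horizon s + 1"
  by (simp add: horizon_def event_count_rstep)

lemma horizon_report_within_round:
  assumes "bcnt s + 1 \<noteq> k" "bcnt s < k" "i < k"
  shows "horizon (rstep k \<epsilon> c s i True) = horizon s + 1 - 1 / prob s"
  using assms by (simp add: horizon_def event_count_rstep rstep_report_within_round of_nat_diff
      flip: diff_divide_distrib)

lemma horizon_report_round_end:
  assumes "bcnt s + 1 = k" "i < k"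
  shows "horizon (rstep k \<epsilon> c s i True)
      = real (event_count s + 1) + max (real k) (ratio * real (event_count s + 1))"
    and "horizon s + 1 - 1 / prob s = real (event_count s + 1)"
proof -
  show "horizon (rstep k \<epsilon> c s i True)
      = real (event_count s + 1) + max (real k) (ratio * real (event_count s + 1))"
    using assms ratio_pos k_ge_1
    by (simp add: horizon_def event_count_rstep rstep_report_round_end divide_min_1_divide)
  show "horizon s + 1 - 1 / prob s = real (event_count s + 1)"
    using assms by (simp add: horizon_def)
qed

section \<open>Lower bound\<close>

definition lower_potential :: "rstate \<Rightarrow> real" where
  "lower_potential s = ln (horizon s) - rate * real (rounds s) - ln (real (rounds s) + 1)"

lemma lower_potential_step:
  assumes inv: "protocol_inv s" and "i < k"
  shows "prob s * lower_potential (rstep k \<epsilon> c s i True)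
      + (1 - prob s) * lower_potential (rstep k \<epsilon> c s i False) \<le> lower_potential s"
proof -
  define H p R where "H = horizon s" and "p = prob s" and "R = real (rounds s)"
  define Z where "Z = rate * R + ln (R + 1)"
  have p: "0 < p" "p \<le> 1" and "bcnt s < k"
    using inv by (auto simp: protocol_inv_def p_def)
  have "1 / p \<le> H"
    using horizon_ge[OF inv] by (simp add: H_def p_def)
  have report: "lower_potential (rstep k \<epsilon> c s i True) \<le> ln (H + 1 - 1 / p) - Z"
  proof (cases "bcnt s + 1 = k")
    case True
    define n' where "n' = real (event_count s + 1)"
    have "k * (rounds s + 1) \<le> event_count s + 1"
      using inv True by (simp add: protocol_inv_def)
    then have "real (k * (rounds s + 1)) \<le> n'"
      unfolding n'_def by (rule of_nat_mono)
    then have "real k * (R + 1) \<le> n'"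
      by (simp add: R_def algebra_simps)
    then have "ln (n' + max (real k) (ratio * n')) \<le> ln n' + rate + (ln (R + 2) - ln (R + 1))"
      unfolding rate_def using ratio_pos by (intro ln_add_max_le) (auto simp: R_def n'_def)
    moreover have "lower_potential (rstep k \<epsilon> c s i True)
        = ln (n' + max (real k) (ratio * n')) - rate * (R + 1) - ln (R + 2)"
      using True \<open>i < k\<close>
      by (simp add: lower_potential_def rstep_report_round_end horizon_report_round_end n'_def R_def
          add.commute)
    moreover have "H + 1 - 1 / p = n'"
      using horizon_report_round_end(2)[OF True \<open>i < k\<close>] by (simp add: H_def p_def n'_def)
    ultimately show ?thesis
      by (simp add: Z_def algebra_simps)
  next
    case False
    then show ?thesis
      using \<open>bcnt s < k\<close> \<open>i < k\<close>
      by (simp add: lower_potential_def horizon_report_within_round rstep_report_within_round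
          Z_def H_def p_def R_def)
  qed
  have no_report: "lower_potential (rstep k \<epsilon> c s i False) = ln (H + 1) - Z"
    using \<open>i < k\<close> by (simp add: lower_potential_def horizon_no_report Z_def H_def R_def)
  have "p * lower_potential (rstep k \<epsilon> c s i True)
      + (1 - p) * lower_potential (rstep k \<epsilon> c s i False)
      \<le> p * (ln (H + 1 - 1 / p) - Z) + (1 - p) * (ln (H + 1) - Z)"
    using report no_report p by (intro add_mono mult_left_mono) auto
  also have "\<dots> \<le> ln H - Z"
    using ln_mean_step[OF p \<open>1 / p \<le> H\<close>] by (simp add: algebra_simps)
  finally show ?thesis
    by (simp add: lower_potential_def Z_def H_def p_def R_def)
qed

lemma expected_rounds_lower_bound:
  assumes adv: "valid_adv k adv" and "1 \<le> N"
  shows "ln (real N) - ln (real k) - ln ((1 + rate) / rate)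
    \<le> 2 * rate * measure_pmf.expectation (rrun k \<epsilon> c adv N) (\<lambda>h. real (RN h))"
proof -
  let ?M = "rrun k \<epsilon> c adv N"
  have "measure_pmf.expectation ?M (\<lambda>h. lower_potential (last (fst h))) \<le> lower_potential rinit"
    using adv lower_potential_step by (rule rrun_supermartingale)
  also have "lower_potential rinit = ln (real k)"
    by (simp add: lower_potential_def horizon_def rinit_def event_count_def)
  finally have potential:
    "measure_pmf.expectation ?M (\<lambda>h. lower_potential (last (fst h))) \<le> ln (real k)" .
  have pointwise: "ln (real N) - ln ((1 + rate) / rate) - 2 * rate * real (RN h)
      \<le> lower_potential (last (fst h))" if "h \<in> set_pmf ?M" for h
  proof -
    define s where "s = last (fst h)"
    have inv: "protocol_inv s" and "event_count s = N"
      using rrun_inv[OF adv that] by (auto simp: s_def)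
    have "real N \<le> horizon s"
      using event_count_lt_horizon[OF inv] \<open>event_count s = N\<close> by simp
    then have "ln (real N) \<le> ln (horizon s)"
      using \<open>1 \<le> N\<close> by simp
    moreover have "ln (real (rounds s) + 1)
        \<le> rate / (1 + rate) * real (rounds s) + ln ((1 + rate) / rate)"
      using ln_le_linear[of "rate / (1 + rate)" "real (rounds s)"] rate_pos by simp
    moreover have "rate / (1 + rate) * real (rounds s) \<le> rate * real (rounds s)"
      using rate_pos by (intro mult_right_mono) (auto simp: field_simps)
    ultimately show ?thesis
      by (simp add: lower_potential_def RN_def s_def)
  qed
  have integrable: "integrable ?M f" for f :: "_ \<Rightarrow> real"
    by (intro integrable_measure_pmf_finite finite_set_pmf_rrun)
  have "ln (real N) - ln ((1 + rate) / rate)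
      - 2 * rate * measure_pmf.expectation ?M (\<lambda>h. real (RN h))
      = measure_pmf.expectation ?M
          (\<lambda>h. ln (real N) - ln ((1 + rate) / rate) - 2 * rate * real (RN h))"
    by (simp add: integrable)
  also have "\<dots> \<le> measure_pmf.expectation ?M (\<lambda>h. lower_potential (last (fst h)))"
    using pointwise by (intro integral_mono_AE AE_pmfI integrable) auto
  finally show ?thesis
    using potential by linarith
qed

lemma Lscale_eq_ln_div_rate: "Lscale k \<epsilon> c N = ln (real N) / rate"
  by (simp add: Lscale_def rate_def ratio_def)

lemma eventually_expected_rounds_ge:
  "\<forall>\<^sub>F N in sequentially. \<forall>adv. valid_adv k adv \<longrightarrow>
     1 / 4 * Lscale k \<epsilon> c N \<le> measure_pmf.expectation (rrun k \<epsilon> c adv N) (\<lambda>h. real (RN h))"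
  using eventually_ln_ge[of "2 * (ln (real k) + ln ((1 + rate) / rate))"]
    eventually_ge_at_top[of 1]
proof eventually_elim
  case (elim N)
  show ?case
  proof (intro allI impI)
    fix adv assume "valid_adv k adv"
    from expected_rounds_lower_bound[OF this \<open>1 \<le> N\<close>] elim(1) rate_pos
    show "1 / 4 * Lscale k \<epsilon> c N \<le> measure_pmf.expectation (rrun k \<epsilon> c adv N) (\<lambda>h. real (RN h))"
      by (simp add: Lscale_eq_ln_div_rate field_simps)
  qed
qed

section \<open>Upper bound\<close>

definition half_rate :: real where
  "half_rate = ln (1 + ratio / 2)"

text \<open>With this choice \<open>theta \<ge> 1\<close>, while \<open>(1 + ratio) ^ (nu - 1) \<le> e\<^sup>2\<close> keeps the
  linearisation in \<open>power_mean_step\<close> within a factor \<open>9\<close>.\<close>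

definition nu :: nat where
  "nu = max 1 (nat \<lceil>1 / half_rate\<rceil>)"

definition theta :: real where
  "theta = real nu * half_rate"

lemma half_rate_pos: "0 < half_rate"
  using ratio_pos by (simp add: half_rate_def)

lemma rate_le_twice_half_rate: "rate \<le> 2 * half_rate"
proof -
  have "1 + ratio \<le> (1 + ratio / 2) ^ 2"
    by (simp add: power2_eq_square algebra_simps)
  then have "ln (1 + ratio) \<le> ln ((1 + ratio / 2) ^ 2)"
    using ratio_pos by simp
  then show ?thesis
    using ratio_pos by (simp add: rate_def half_rate_def ln_realpow)
qed

lemma nu_ge_inverse_half_rate: "1 / half_rate \<le> real nu"
  using real_nat_ceiling_ge[of "1 / half_rate"] by (simp add: nu_def)

lemma theta_ge_1: "1 \<le> theta"
  using nu_ge_inverse_half_rate half_rate_pos by (simp add: theta_def field_simps)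

lemma exp_theta: "exp theta = (1 + ratio / 2) ^ nu"
  using ratio_pos by (simp add: theta_def half_rate_def exp_of_nat_mult)

lemma one_plus_ratio_power_le: "(1 + ratio) ^ (nu - 1) \<le> 9"
proof -
  have "real (nu - 1) \<le> 1 / half_rate"
  proof (cases "nu = 1")
    case False
    then have nu: "nu = nat \<lceil>1 / half_rate\<rceil>"
      by (simp add: nu_def max_def split: if_splits)
    have "real (nat \<lceil>1 / half_rate\<rceil>) = of_int \<lceil>1 / half_rate\<rceil>"
      using half_rate_pos by (intro of_nat_nat) (simp add: less_trans[of "-1" 0])
    then have "real nu - 1 \<le> 1 / half_rate"
      using nu of_int_ceiling_diff_one_le[of "1 / half_rate"] by simp
    moreover have "1 \<le> nu"
      by (simp add: nu_def)
    ultimately show ?thesis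
      by (simp add: of_nat_diff)
  qed (use half_rate_pos in simp)
  then have "real (nu - 1) * rate \<le> 1 / half_rate * (2 * half_rate)"
    using rate_pos rate_le_twice_half_rate by (intro mult_mono) auto
  then have "real (nu - 1) * rate \<le> 2"
    using half_rate_pos by simp
  have "(1 + ratio) ^ (nu - 1) = exp (real (nu - 1) * rate)"
    using ratio_pos by (simp add: rate_def exp_of_nat_mult)
  also have "\<dots> \<le> exp 1 ^ 2"
    using \<open>real (nu - 1) * rate \<le> 2\<close> by (simp flip: exp_of_nat_mult)
  also have "\<dots> \<le> 3 ^ 2"
    using exp_le by (intro power_mono) auto
  finally show ?thesis
    by simp
qed

text \<open>Within a round \<open>(H + 1) ^ -nu\<close> alone would grow in expectation, \<open>x ^ -nu\<close> being
  convex; the factor \<open>(n + 1) ^ -(9 * nu)\<close>, which shrinks with every event, absorbs this.\<close>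

definition upper_potential :: "rstate \<Rightarrow> real" where
  "upper_potential s = exp (theta * real (rounds s))
     / (real (event_count s + 1) ^ (9 * nu) * (horizon s + 1) ^ nu)"

lemma upper_potential_report_le:
  assumes inv: "protocol_inv s" and "i < k"
  shows "upper_potential (rstep k \<epsilon> c s i True) \<le> exp (theta * real (rounds s))
    / (real (event_count s + 2) ^ (9 * nu) * (horizon s + 2 - 1 / prob s) ^ nu)"
proof (cases "bcnt s + 1 = k")
  case True
  define n' H' where "n' = real (event_count s + 1)"
    and "H' = horizon (rstep k \<epsilon> c s i True) + 1"
  have "1 \<le> n'"
    by (simp add: n'_def)
  have "ratio * (n' + 1) / 2 \<le> ratio * n'"
    using ratio_pos \<open>1 \<le> n'\<close> by simp
  also have "\<dots> \<le> max (real k) (ratio * n')"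
    by simp
  finally have "(1 + ratio / 2) * (n' + 1) \<le> H'"
    using horizon_report_round_end(1)[OF True \<open>i < k\<close>]
    by (simp add: H'_def n'_def algebra_simps)
  then have "exp theta * (n' + 1) ^ nu \<le> H' ^ nu"
    using ratio_pos \<open>1 \<le> n'\<close> by (simp add: exp_theta power_mono flip: power_mult_distrib)
  moreover have "0 < exp theta * (n' + 1) ^ nu"
    using \<open>1 \<le> n'\<close> by simp
  ultimately have "0 < H' ^ nu"
    by linarith
  have "upper_potential (rstep k \<epsilon> c s i True)
      = exp (theta * real (rounds s)) * exp theta / ((n' + 1) ^ (9 * nu) * H' ^ nu)"
    using True \<open>i < k\<close>
    by (simp add: upper_potential_def rstep_report_round_end event_count_rstep n'_def H'_def
        distrib_left exp_add add.commute)
  also have "\<dots> \<le> exp (theta * real (rounds s)) * exp theta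
      / ((n' + 1) ^ (9 * nu) * (exp theta * (n' + 1) ^ nu))"
    using \<open>exp theta * (n' + 1) ^ nu \<le> H' ^ nu\<close> \<open>0 < H' ^ nu\<close> \<open>1 \<le> n'\<close>
    by (intro divide_left_mono mult_left_mono mult_pos_pos) auto
  also have "\<dots> = exp (theta * real (rounds s)) / ((n' + 1) ^ (9 * nu) * (n' + 1) ^ nu)"
    by simp
  also have "\<dots> = exp (theta * real (rounds s))
      / (real (event_count s + 2) ^ (9 * nu) * (horizon s + 2 - 1 / prob s) ^ nu)"
  proof -
    have "horizon s + 2 - 1 / prob s = n' + 1" "real (event_count s + 2) = n' + 1"
      using horizon_report_round_end(2)[OF True \<open>i < k\<close>] unfolding n'_def by simp_all
    then show ?thesis
      by (simp only:)
  qed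
  finally show ?thesis .
next
  case False
  with inv \<open>i < k\<close> show ?thesis
    by (simp add: upper_potential_def protocol_inv_def horizon_report_within_round
        rstep_report_within_round event_count_rstep algebra_simps)
qed

lemma upper_potential_step:
  assumes inv: "protocol_inv s" and "i < k"
  shows "prob s * upper_potential (rstep k \<epsilon> c s i True)
      + (1 - prob s) * upper_potential (rstep k \<epsilon> c s i False) \<le> upper_potential s"
proof -
  define y \<psi> p E where "y = real (event_count s + 1)" and "\<psi> = horizon s + 1" and "p = prob s"
    and "E = exp (theta * real (rounds s))"
  define D where "D = (y + 1) ^ (9 * nu) * \<psi> ^ nu"
  have p: "0 < p" "p \<le> 1"
    using inv by (auto simp: protocol_inv_def p_def)
  have "1 \<le> y" "0 < E"
    by (simp_all add: y_def E_def)
  have "y + 1 \<le> \<psi> + 1 - 1 / p"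
    using horizon_ge[OF inv] by (simp add: y_def \<psi>_def p_def)
  have "1 / p - 1 \<le> ratio * y"
    using inverse_prob_le[OF inv] ratio_pos by (simp add: y_def p_def algebra_simps)
  have "0 < \<psi>" "0 < \<psi> + 1 - 1 / p"
    using \<open>1 \<le> y\<close> \<open>y + 1 \<le> \<psi> + 1 - 1 / p\<close> p by (auto intro: order.strict_trans2[of 0 "1 / p"])
  then have "0 < D"
    using \<open>1 \<le> y\<close> by (simp add: D_def)
  have report: "upper_potential (rstep k \<epsilon> c s i True)
      \<le> E / ((y + 1) ^ (9 * nu) * (\<psi> + 1 - 1 / p) ^ nu)"
    using upper_potential_report_le[OF inv \<open>i < k\<close>] by (simp add: y_def \<psi>_def p_def E_def add_ac)
  have no_report: "upper_potential (rstep k \<epsilon> c s i False)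
      = E / ((y + 1) ^ (9 * nu) * (\<psi> + 1) ^ nu)"
    using \<open>i < k\<close>
    by (simp add: upper_potential_def horizon_no_report event_count_rstep y_def \<psi>_def E_def)
  have "p * upper_potential (rstep k \<epsilon> c s i True)
      + (1 - p) * upper_potential (rstep k \<epsilon> c s i False)
      \<le> p * (E / ((y + 1) ^ (9 * nu) * (\<psi> + 1 - 1 / p) ^ nu))
        + (1 - p) * (E / ((y + 1) ^ (9 * nu) * (\<psi> + 1) ^ nu))"
    using report no_report p by (intro add_mono mult_left_mono) auto
  also have "\<dots> = E / D * (p * (\<psi> / (\<psi> + 1 - 1 / p)) ^ nu + (1 - p) * (\<psi> / (\<psi> + 1)) ^ nu)"
    using \<open>0 < \<psi>\<close> \<open>0 < \<psi> + 1 - 1 / p\<close> \<open>1 \<le> y\<close>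
    by (simp add: D_def power_divide field_simps)
  also have "\<dots> \<le> E / D * ((y + 1) / y) ^ (9 * nu)"
    using power_mean_step[OF p \<open>1 \<le> y\<close> \<open>y + 1 \<le> \<psi> + 1 - 1 / p\<close> \<open>1 / p - 1 \<le> ratio * y\<close>
        one_plus_ratio_power_le order.refl] \<open>0 < E\<close> \<open>0 < D\<close>
    by (intro mult_left_mono) auto
  also have "\<dots> = upper_potential s"
    using \<open>1 \<le> y\<close>
    by (simp add: upper_potential_def D_def y_def \<psi>_def E_def power_divide field_simps)
  finally show ?thesis
    by (simp add: p_def)
qed

definition mgf_bound :: "nat \<Rightarrow> real" where
  "mgf_bound N = (real N + 1) ^ (10 * nu) * (1 + ratio) ^ nu"

lemma rounds_mgf_le:
  assumes adv: "valid_adv k adv"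
  shows "measure_pmf.expectation (rrun k \<epsilon> c adv N) (\<lambda>h. exp (theta * real (RN h)))
    \<le> mgf_bound N"
proof -
  let ?M = "rrun k \<epsilon> c adv N"
  let ?C = "(1 + real k) ^ nu * mgf_bound N"
  have integrable: "integrable ?M f" for f :: "_ \<Rightarrow> real"
    by (intro integrable_measure_pmf_finite finite_set_pmf_rrun)
  have "measure_pmf.expectation ?M (\<lambda>h. upper_potential (last (fst h))) \<le> upper_potential rinit"
    using adv upper_potential_step by (rule rrun_supermartingale)
  also have "upper_potential rinit = 1 / (1 + real k) ^ nu"
    by (simp add: upper_potential_def horizon_def rinit_def event_count_def add.commute)
  finally have potential:
    "measure_pmf.expectation ?M (\<lambda>h. upper_potential (last (fst h))) \<le> 1 / (1 + real k) ^ nu" .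
  have pointwise: "exp (theta * real (RN h)) \<le> ?C * upper_potential (last (fst h))"
    if "h \<in> set_pmf ?M" for h
  proof -
    define s where "s = last (fst h)"
    have inv: "protocol_inv s" and "event_count s = N"
      using rrun_inv[OF adv that] by (auto simp: s_def)
    have "0 < horizon s + 1"
      using event_count_lt_horizon[OF inv] of_nat_0_le_iff[of "event_count s"] by linarith
    have "real k + (1 + ratio) * real N + 1 \<le> (1 + real k) * (real N + 1) * (1 + ratio)"
    proof -
      have "0 \<le> real k * real N + ratio + ratio * real k + ratio * real k * real N"
        using ratio_pos by simp
      then show ?thesis
        by (simp add: algebra_simps)
    qed
    then have "horizon s + 1 \<le> (1 + real k) * (real N + 1) * (1 + ratio)"
      using horizon_le[OF inv] \<open>event_count s = N\<close> by simp
    then have "(horizon s + 1) ^ nu \<le> ((1 + real k) * (real N + 1) * (1 + ratio)) ^ nu"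
      using \<open>0 < horizon s + 1\<close> by (intro power_mono) auto
    then have "(real N + 1) ^ (9 * nu) * (horizon s + 1) ^ nu
        \<le> (real N + 1) ^ (9 * nu) * ((1 + real k) * (real N + 1) * (1 + ratio)) ^ nu"
      by (rule mult_left_mono) simp
    also have "\<dots> = ?C"
      by (simp add: mgf_bound_def power_mult_distrib mult_ac flip: power_add)
    finally have "(real N + 1) ^ (9 * nu) * (horizon s + 1) ^ nu \<le> ?C" .
    moreover have "exp (theta * real (RN h))
        = (real N + 1) ^ (9 * nu) * (horizon s + 1) ^ nu * upper_potential s"
      using \<open>0 < horizon s + 1\<close> \<open>event_count s = N\<close>
      by (simp add: upper_potential_def RN_def s_def add.commute)
    moreover have "0 \<le> upper_potential s"
      using \<open>0 < horizon s + 1\<close> by (simp add: upper_potential_def)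
    ultimately show ?thesis
      by (simp add: mult_right_mono s_def)
  qed
  have "measure_pmf.expectation ?M (\<lambda>h. exp (theta * real (RN h)))
      \<le> measure_pmf.expectation ?M (\<lambda>h. ?C * upper_potential (last (fst h)))"
    using pointwise by (intro integral_mono_AE AE_pmfI integrable) auto
  also have "\<dots> = ?C * measure_pmf.expectation ?M (\<lambda>h. upper_potential (last (fst h)))"
    by simp
  also have "\<dots> \<le> ?C * (1 / (1 + real k) ^ nu)"
    using potential ratio_pos by (intro mult_left_mono) (simp_all add: mgf_bound_def)
  also have "\<dots> = mgf_bound N"
    by simp
  finally show ?thesis .
qed

lemma eventually_ln_mgf_bound_le:
  "\<forall>\<^sub>F N in sequentially. ln (mgf_bound N) / theta \<le> 41 * Lscale k \<epsilon> c N"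
  using eventually_ln_ge[of "2 * rate"] eventually_ge_at_top[of 2]
proof eventually_elim
  case (elim N)
  have "2 \<le> real N"
    using elim(2) by simp
  then have "2 * real N \<le> real N * real N"
    by (intro mult_right_mono) auto
  then have "real N + 1 \<le> real N ^ 2"
    using \<open>2 \<le> real N\<close> unfolding power2_eq_square by linarith
  then have "ln (real N + 1) \<le> ln (real N ^ 2)"
    using \<open>2 \<le> real N\<close> by (subst ln_le_cancel_iff) auto
  also have "\<dots> = 2 * ln (real N)"
    using elim(2) by (simp add: ln_realpow)
  finally have "ln (real N + 1) \<le> 2 * ln (real N)" .
  have "0 < nu"
    by (simp add: nu_def)
  have "ln (mgf_bound N) = real nu * (10 * ln (real N + 1) + rate)"
    using ratio_pos by (simp add: mgf_bound_def ln_mult ln_realpow rate_def algebra_simps)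
  then have "ln (mgf_bound N) / theta = (10 * ln (real N + 1) + rate) / half_rate"
    using \<open>0 < nu\<close> by (simp add: theta_def)
  also have "\<dots> \<le> (20 * ln (real N) + rate) / (rate / 2)"
    using \<open>ln (real N + 1) \<le> 2 * ln (real N)\<close> rate_le_twice_half_rate rate_pos elim(1)
    by (intro frac_le) auto
  also have "\<dots> = 40 * (ln (real N) / rate) + 2"
    using rate_pos by (simp add: field_simps)
  also have "\<dots> \<le> 41 * (ln (real N) / rate)"
    using elim(1) rate_pos by (simp add: field_simps)
  finally show ?case
    by (simp add: Lscale_eq_ln_div_rate)
qed

lemma eventually_expected_rounds_le:
  "\<forall>\<^sub>F N in sequentially. \<forall>adv. valid_adv k adv \<longrightarrow>
     measure_pmf.expectation (rrun k \<epsilon> c adv N) (\<lambda>h. real (RN h)) \<le> 41 * Lscale k \<epsilon> c N"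
  using eventually_ln_mgf_bound_le
proof eventually_elim
  case (elim N)
  show ?case
  proof (intro allI impI)
    fix adv assume "valid_adv k adv"
    then have "measure_pmf.expectation (rrun k \<epsilon> c adv N) (\<lambda>h. real (RN h))
        \<le> ln (mgf_bound N) / theta"
      using theta_ge_1 rounds_mgf_le
      by (intro measure_pmf.expectation_le_ln_mgf_bound)
        (auto intro: integrable_measure_pmf_finite finite_set_pmf_rrun)
    with elim show "measure_pmf.expectation (rrun k \<epsilon> c adv N) (\<lambda>h. real (RN h))
        \<le> 41 * Lscale k \<epsilon> c N"
      by linarith
  qed
qed

lemma eventually_rounds_tail_bound:
  "\<forall>\<^sub>F N in sequentially. \<forall>adv. valid_adv k adv \<longrightarrow> (\<forall>\<delta>. 0 < \<delta> \<longrightarrow> \<delta> < 1 \<longrightarrow>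
     1 - \<delta> \<le> measure_pmf.prob (rrun k \<epsilon> c adv N)
       {h. real (RN h) \<le> 41 * (Lscale k \<epsilon> c N + ln (1 / \<delta>))})"
  using eventually_ln_mgf_bound_le
proof eventually_elim
  case (elim N)
  show ?case
  proof (intro allI impI)
    fix adv and \<delta> :: real assume "valid_adv k adv" "0 < \<delta>" "\<delta> < 1"
    let ?M = "rrun k \<epsilon> c adv N"
    have "0 < mgf_bound N"
      using ratio_pos by (simp add: mgf_bound_def)
    then have "1 - \<delta>
        \<le> measure_pmf.prob ?M {h. real (RN h) \<le> (ln (mgf_bound N) + ln (1 / \<delta>)) / theta}"
      using theta_ge_1 rounds_mgf_le[OF \<open>valid_adv k adv\<close>] \<open>0 < \<delta>\<close>
      by (intro measure_pmf.prob_le_ln_mgf_bound_ge[where X = "\<lambda>h. real (RN h)", simplified])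
        (auto intro: integrable_measure_pmf_finite finite_set_pmf_rrun)
    also have "\<dots> \<le> measure_pmf.prob ?M {h. real (RN h) \<le> 41 * (Lscale k \<epsilon> c N + ln (1 / \<delta>))}"
    proof (intro measure_pmf.finite_measure_mono subsetI)
      have "0 \<le> ln (1 / \<delta>)"
        using \<open>0 < \<delta>\<close> \<open>\<delta> < 1\<close> by simp
      then have "ln (1 / \<delta>) / theta \<le> ln (1 / \<delta>)"
        using divide_left_mono[OF theta_ge_1 \<open>0 \<le> ln (1 / \<delta>)\<close>] theta_ge_1 by simp
      then have "(ln (mgf_bound N) + ln (1 / \<delta>)) / theta
          \<le> 41 * (Lscale k \<epsilon> c N + ln (1 / \<delta>))"
        using elim \<open>0 \<le> ln (1 / \<delta>)\<close> by (simp add: add_divide_distrib)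
      then show "h \<in> {h. real (RN h) \<le> 41 * (Lscale k \<epsilon> c N + ln (1 / \<delta>))}"
        if "h \<in> {h. real (RN h) \<le> (ln (mgf_bound N) + ln (1 / \<delta>)) / theta}" for h
        using that by simp
    qed simp
    finally show "1 - \<delta>
        \<le> measure_pmf.prob ?M {h. real (RN h) \<le> 41 * (Lscale k \<epsilon> c N + ln (1 / \<delta>))}" .
  qed
qed

lemma rounds_bounds_for_large_N:
  "\<exists>N0. \<forall>N \<ge> N0. \<forall>adv. valid_adv k adv \<longrightarrow>
     1 / 4 * Lscale k \<epsilon> c N \<le> measure_pmf.expectation (rrun k \<epsilon> c adv N) (\<lambda>h. real (RN h)) \<and>
     measure_pmf.expectation (rrun k \<epsilon> c adv N) (\<lambda>h. real (RN h)) \<le> 41 * Lscale k \<epsilon> c N \<and>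
     (\<forall>\<delta>. 0 < \<delta> \<longrightarrow> \<delta> < 1 \<longrightarrow>
        measure_pmf.prob (rrun k \<epsilon> c adv N)
          {h. real (RN h) \<le> 41 * (Lscale k \<epsilon> c N + ln (1 / \<delta>))} \<ge> 1 - \<delta>)"
  using eventually_conj[OF eventually_expected_rounds_ge
      eventually_conj[OF eventually_expected_rounds_le eventually_rounds_tail_bound]]
  unfolding eventually_sequentially by blast

end

theorem mainTheorem7:
  "\<exists>C1 C2 C3 :: real. C1 > 0 \<and> C2 > 0 \<and> C3 > 0 \<and>
     (\<forall>(k::nat) (\<epsilon>::real) (c::real). k \<ge> 1 \<longrightarrow> \<epsilon> > 0 \<longrightarrow> c \<ge> 1 \<longrightarrow>
       (\<exists>N0::nat. \<forall>N \<ge> N0. \<forall>adv. valid_adv k adv \<longrightarrow>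
          C1 * Lscale k \<epsilon> c N \<le> measure_pmf.expectation (rrun k \<epsilon> c adv N) (\<lambda>h. real (RN h)) \<and>
          measure_pmf.expectation (rrun k \<epsilon> c adv N) (\<lambda>h. real (RN h)) \<le> C2 * Lscale k \<epsilon> c N \<and>
          (\<forall>\<delta>::real. 0 < \<delta> \<longrightarrow> \<delta> < 1 \<longrightarrow>
             measure_pmf.prob (rrun k \<epsilon> c adv N)
               {h. real (RN h) \<le> C3 * (Lscale k \<epsilon> c N + ln (1 / \<delta>))} \<ge> 1 - \<delta>)))"
proof (rule exI[of _ "1 / 4"], rule exI[of _ 41], rule exI[of _ 41],
    intro conjI allI impI robust_protocol.rounds_bounds_for_large_N)
  show "robust_protocol k \<epsilon> c" if "k \<ge> 1" "\<epsilon> > 0" "c \<ge> 1" for k \<epsilon> c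
    using that by unfold_locales auto
qed simp_all

end
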